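(* Let $A\in\mathbb{R}^{m\times n}$ be semimonotone ($A^{\dagger}\geq 0$) and let $(U_k,V_k,E_k)_{k=1}^{p}$ be a proper weak regular multisplitting of $A$ such that $R(E_k)\subseteq R(A^{T})$ for each $k=1,\ldots,p$. Let $H=\sum_{k=1}^{p}E_kU_k^{\dagger}V_k$. Then $I-H$ is invertible, and with $B=A(I-H)^{-1}$ and $C=B-A$, the splitting $A=B-C$ is the unique proper splitting of $A$ induced by $H$ (i.e. with $B^{\dagger}C=H$), and it is a convergent proper weak regular splitting.
   Context: $A^{\dagger}$ denotes the Moore–Penrose inverse, $\rho(\cdot)$ the spectral radius, $R(\cdot)$ and $N(\cdot)$ range and null space; inequalities are entrywise. A splitting $A=U-V$ is proper if $R(U)=R(A)$ and $N(U)=N(A)$; it is convergent if $\rho(U^{\dagger}V)<1$; a proper splitting is proper weak regular if $U^{\dagger}\geq 0$ and $U^{\dagger}V\geq 0$. A triplet $(U_k,V_k,E_k)_{k=1}^{p}$ is a proper multisplitting of $A\in\mathbb{R}^{m\times n}$ if each $A=U_k-V_k$ is a proper splitting and each $E_k\geq 0$ is an $n\times n$ diagonal matrix with $\sum_{k=1}^{p}E_k=I_n$; it is a proper weak regular multisplitting if each $A=U_k-V_k$ is a proper weak regular splitting. A splitting $A=B-C$ is said to be induced by $H$ if $B^{\dagger}C=H$. *)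

theory Defs
  imports "HOL-Analysis.Analysis"
begin

text \<open>Matrices are real^'n^'m (m rows, n columns). Moore--Penrose inverse via the four Penrose equations.\<close>

definition moore_penrose :: "real^'n^'m \<Rightarrow> real^'m^'n" where
  "moore_penrose A = (THE X. A ** X ** A = A \<and> X ** A ** X = X \<and>
      transpose (A ** X) = A ** X \<and> transpose (X ** A) = X ** A)"

definition mat_range :: "real^'n^'m \<Rightarrow> (real^'m) set" where
  "mat_range A = range (\<lambda>x. A *v x)"

definition mat_null :: "real^'n^'m \<Rightarrow> (real^'n) set" where
  "mat_null A = {x. A *v x = 0}"

definition nonneg_mat :: "real^'n^'m \<Rightarrow> bool" where
  "nonneg_mat A \<longleftrightarrow> (\<forall>i j. 0 \<le> A $ i $ j)"

definition diagonal_mat :: "real^'n^'n \<Rightarrow> bool" where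
  "diagonal_mat E \<longleftrightarrow> (\<forall>i j. i \<noteq> j \<longrightarrow> E $ i $ j = 0)"

definition spectral_radius :: "real^'n^'n \<Rightarrow> real" where
  "spectral_radius M = Sup {cmod z | z. \<exists>v :: complex^'n. v \<noteq> 0 \<and>
       (\<chi> i j. complex_of_real (M $ i $ j)) *v v = z *s v}"

definition proper_splitting :: "real^'n^'m \<Rightarrow> real^'n^'m \<Rightarrow> real^'n^'m \<Rightarrow> bool" where
  "proper_splitting A U V \<longleftrightarrow> A = U - V \<and> mat_range U = mat_range A \<and> mat_null U = mat_null A"

definition convergent_splitting :: "real^'n^'m \<Rightarrow> real^'n^'m \<Rightarrow> bool" where
  "convergent_splitting U V \<longleftrightarrow> spectral_radius (moore_penrose U ** V) < 1"

definition proper_weak_regular_splitting :: "real^'n^'m \<Rightarrow> real^'n^'m \<Rightarrow> real^'n^'m \<Rightarrow> bool" where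
  "proper_weak_regular_splitting A U V \<longleftrightarrow> proper_splitting A U V \<and>
     nonneg_mat (moore_penrose U) \<and> nonneg_mat (moore_penrose U ** V)"

definition proper_weak_regular_multisplitting ::
  "real^'n^'m \<Rightarrow> nat \<Rightarrow> (nat \<Rightarrow> real^'n^'m) \<Rightarrow> (nat \<Rightarrow> real^'n^'m) \<Rightarrow> (nat \<Rightarrow> real^'n^'n) \<Rightarrow> bool" where
  "proper_weak_regular_multisplitting A p U V E \<longleftrightarrow>
     (\<forall>k\<in>{1..p}. proper_weak_regular_splitting A (U k) (V k) \<and> nonneg_mat (E k) \<and> diagonal_mat (E k)) \<and>
     (\<Sum>k=1..p. E k) = mat 1"

end

theory Submission
  imports Defs "HOL-Computational_Algebra.Fundamental_Theorem_Algebra"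
begin

text \<open>The range condition on the weights forces \<open>N(A) = 0\<close>: every \<open>x\<close> is \<open>\<Sum>k. E\<^sub>k x\<close> with
\<open>E\<^sub>k x \<in> R(A\<^sup>T)\<close>, which is orthogonal to \<open>N(A)\<close>. So \<open>A\<^sup>\<dagger> = (A\<^sup>TA)\<^sup>-\<^sup>1A\<^sup>T\<close> is a left inverse
of \<open>A\<close>, and \<open>AA\<^sup>\<dagger>\<close>, the orthogonal projector onto \<open>R(A) = R(U\<^sub>k)\<close>, equals every \<open>U\<^sub>kU\<^sub>k\<^sup>\<dagger>\<close>.
Hence \<open>U\<^sub>k\<^sup>\<dagger>V\<^sub>k = I - U\<^sub>k\<^sup>\<dagger>A\<close> and \<open>H = I - GA\<close> with \<open>G = \<Sum>k. E\<^sub>kU\<^sub>k\<^sup>\<dagger> \<ge> 0\<close>.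
The vector \<open>w = A\<^sup>\<dagger>\<one>\<close> is positive (a nonnegative left inverse has no zero row) and
\<open>Hw = w - G\<one> < w\<close>, so by the Collatz--Wielandt argument every eigenvalue of the nonnegative
matrix \<open>H\<close> has modulus below \<open>1\<close>. Consequently \<open>I - H\<close> is invertible, and \<open>B = A(I - H)\<^sup>-\<^sup>1\<close>
is a proper splitting with \<open>B\<^sup>\<dagger>C = H\<close> and \<open>B\<^sup>\<dagger> = (I - H)A\<^sup>\<dagger> = GAA\<^sup>\<dagger> = G \<ge> 0\<close>; conversely,
\<open>B\<^sup>\<dagger>C = H\<close> forces \<open>B(I - H) = BB\<^sup>\<dagger>A = AA\<^sup>\<dagger>A = A\<close>.\<close>

lemma matrix_inv_right:
  assumes "invertible (A :: 'a::semiring_1^'n^'m)"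
  shows "A ** matrix_inv A = mat 1"
  using someI_ex[OF assms[unfolded invertible_def]] unfolding matrix_inv_def by auto

lemma matrix_inv_left:
  assumes "invertible (A :: 'a::semiring_1^'n^'m)"
  shows "matrix_inv A ** A = mat 1"
  using someI_ex[OF assms[unfolded invertible_def]] unfolding matrix_inv_def by auto

lemma left_inverse_eq_right_inverse:
  "(B :: 'a::semiring_1^'n^'n) ** A = mat 1 \<Longrightarrow> A ** C = mat 1 \<Longrightarrow> B = C"
  by (metis matrix_mul_assoc matrix_mul_lid matrix_mul_rid)

lemma matrix_add_rdistrib: "((B :: 'a::comm_ring_1^'c^'b) + C) ** A = B ** A + C ** A"
  by (simp add: matrix_matrix_mult_def vec_eq_iff sum.distrib algebra_simps)

lemma matrix_diff_ldistrib: "(A :: 'a::comm_ring_1^'c^'b) ** (B - C) = A ** B - A ** C"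
  by (simp add: matrix_matrix_mult_def vec_eq_iff sum_subtractf algebra_simps)

lemma matrix_sum_rdistrib: "(\<Sum>k\<in>S. F k) ** (M :: 'a::comm_ring_1^'c^'b) = (\<Sum>k\<in>S. F k ** M)"
  by (induct S rule: infinite_finite_induct) (simp_all add: matrix_add_rdistrib)

lemma matrix_vector_sum_rdistrib: "(\<Sum>k\<in>S. F k) *v (x :: 'a::comm_ring_1^'c) = (\<Sum>k\<in>S. F k *v x)"
  by (induct S rule: infinite_finite_induct) (simp_all add: matrix_vector_mult_add_rdistrib)

lemma mat_vector_mult: "(mat z :: 'a::comm_ring_1^'n^'n) *v x = z *s x"
  by (simp add: vec_eq_iff mat_def matrix_vector_mult_def if_distrib if_distribR cong: if_cong)

lemma diagonal_mat_vector_mult: "diagonal_mat E \<Longrightarrow> (E *v u) $ i = E $ i $ i * u $ i"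
  unfolding diagonal_mat_def matrix_vector_mult_def
  by (simp add: sum.remove[of UNIV i] sum.neutral)

lemma mat_null_eq_0_iff: "mat_null X = {0} \<longleftrightarrow> (\<forall>v. X *v v = 0 \<longrightarrow> v = 0)"
  by (auto simp: mat_null_def)

lemma invertible_iff_mat_null: "invertible (M :: real^'n^'n) \<longleftrightarrow> mat_null M = {0}"
  by (metis matrix_left_invertible_ker invertible_left_inverse mat_null_eq_0_iff)

lemma nonneg_mat_mult: "nonneg_mat A \<Longrightarrow> nonneg_mat B \<Longrightarrow> nonneg_mat (A ** B)"
  by (simp add: nonneg_mat_def matrix_matrix_mult_def sum_nonneg)

lemma nonneg_mat_sum: "(\<And>k. k \<in> S \<Longrightarrow> nonneg_mat (F k)) \<Longrightarrow> nonneg_mat (\<Sum>k\<in>S. F k)"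
  by (simp add: nonneg_mat_def sum_nonneg)

section \<open>Moore--Penrose inverse of a matrix of full column rank\<close>

lemma invertible_transpose_mult_self:
  fixes X :: "real^'n^'m"
  assumes "mat_null X = {0}"
  shows "invertible (transpose X ** X)"
proof -
  have "v = 0" if "(transpose X ** X) *v v = 0" for v
  proof -
    have "(X *v v) \<bullet> (X *v v) = v \<bullet> ((transpose X ** X) *v v)"
      by (metis dot_lmul_matrix inner_commute matrix_vector_mul_assoc transpose_transpose vector_transpose_matrix)
    then show "v = 0" using that assms by (simp add: mat_null_eq_0_iff)
  qed
  then show ?thesis by (simp add: invertible_iff_mat_null mat_null_eq_0_iff)
qed

lemma symmetric_matrix_inv:
  fixes K :: "real^'n^'n"
  assumes "invertible K" and "transpose K = K"
  shows "transpose (matrix_inv K) = matrix_inv K"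
proof -
  have "transpose (matrix_inv K) ** K = mat 1"
    by (metis assms matrix_inv_right matrix_transpose_mul transpose_mat)
  then show ?thesis using left_inverse_eq_right_inverse matrix_inv_right[OF assms(1)] by blast
qed

lemma moore_penrose_full_column_rank:
  fixes X :: "real^'n^'m"
  assumes "mat_null X = {0}"
  shows "moore_penrose X = matrix_inv (transpose X ** X) ** transpose X"
proof -
  let ?K = "transpose X ** X"
  let ?Y = "matrix_inv ?K ** transpose X"
  have K: "invertible ?K" using invertible_transpose_mult_self[OF assms] .
  have sym: "transpose (matrix_inv ?K) = matrix_inv ?K"
    using symmetric_matrix_inv[OF K] by (simp add: matrix_transpose_mul)
  have YX: "?Y ** X = mat 1" using matrix_inv_left[OF K] by (simp add: matrix_mul_assoc)
  show ?thesis unfolding moore_penrose_def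
  proof (rule the_equality)
    show "X ** ?Y ** X = X \<and> ?Y ** X ** ?Y = ?Y \<and>
        transpose (X ** ?Y) = X ** ?Y \<and> transpose (?Y ** X) = ?Y ** X"
      using YX sym by (simp add: matrix_mul_assoc[symmetric] matrix_transpose_mul)
  next
    fix Z assume Z: "X ** Z ** X = X \<and> Z ** X ** Z = Z \<and>
        transpose (X ** Z) = X ** Z \<and> transpose (Z ** X) = Z ** X"
    have "?K ** Z = transpose X ** transpose (X ** Z)" using Z by (simp add: matrix_mul_assoc)
    also have "\<dots> = transpose (X ** Z ** X)" by (simp add: matrix_transpose_mul)
    also have "\<dots> = transpose X" using Z by simp
    finally have "?K ** Z = transpose X" .
    then show "Z = ?Y"
      by (metis matrix_inv_left[OF K] matrix_mul_assoc matrix_mul_lid)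
  qed
qed

lemma moore_penrose_left_inverse:
  fixes X :: "real^'n^'m"
  assumes "mat_null X = {0}"
  shows "moore_penrose X ** X = mat 1"
  using matrix_inv_left[OF invertible_transpose_mult_self[OF assms]]
  by (simp add: moore_penrose_full_column_rank[OF assms] matrix_mul_assoc)

lemma symmetric_mult_moore_penrose:
  fixes X :: "real^'n^'m"
  assumes "mat_null X = {0}"
  shows "transpose (X ** moore_penrose X) = X ** moore_penrose X"
  using symmetric_matrix_inv[OF invertible_transpose_mult_self[OF assms]]
  by (simp add: moore_penrose_full_column_rank[OF assms] matrix_mul_assoc[symmetric] matrix_transpose_mul)

lemma idempotent_mult_range_eq:
  fixes S T :: "real^'m^'m"
  assumes "T ** T = T" and "mat_range S \<subseteq> mat_range T"
  shows "T ** S = S"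
proof (rule matrix_eq[THEN iffD2], intro allI)
  fix x
  obtain y where y: "S *v x = T *v y" using assms(2) by (auto simp: mat_range_def)
  have "(T ** S) *v x = (T ** T) *v y" by (simp add: y matrix_vector_mul_assoc[symmetric])
  then show "(T ** S) *v x = S *v x" by (simp add: assms(1) y)
qed

lemma orthogonal_projector_unique:
  fixes S T :: "real^'m^'m"
  assumes "S ** S = S" "T ** T = T" "transpose S = S" "transpose T = T"
    and "mat_range S = mat_range T"
  shows "S = T"
proof -
  have "S = transpose (T ** S)" using idempotent_mult_range_eq[of T S] assms by simp
  also have "\<dots> = S ** T" by (simp add: matrix_transpose_mul assms(3,4))
  also have "\<dots> = T" using idempotent_mult_range_eq[of S T] assms by simp
  finally show ?thesis .
qed

lemma mult_moore_penrose_eq_if_range_eq: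
  fixes X Y :: "real^'n^'m"
  assumes "mat_null X = {0}" "mat_null Y = {0}" and "mat_range X = mat_range Y"
  shows "X ** moore_penrose X = Y ** moore_penrose Y"
proof -
  have props: "P ** moore_penrose P ** (P ** moore_penrose P) = P ** moore_penrose P"
    "mat_range (P ** moore_penrose P) = mat_range P"
    if "mat_null P = {0}" for P :: "real^'n^'m"
  proof -
    have PpP: "moore_penrose P ** P = mat 1" using moore_penrose_left_inverse[OF that] .
    have "P ** moore_penrose P ** (P ** moore_penrose P) = P ** (moore_penrose P ** P) ** moore_penrose P"
      by (simp add: matrix_mul_assoc)
    then show "P ** moore_penrose P ** (P ** moore_penrose P) = P ** moore_penrose P"
      by (simp add: PpP)
    have "(P ** moore_penrose P) *v (P *v x) = P *v x" for x
      by (simp add: matrix_vector_mul_assoc PpP flip: matrix_mul_assoc)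
    then show "mat_range (P ** moore_penrose P) = mat_range P"
      unfolding mat_range_def by (metis image_subset_iff matrix_vector_mul_assoc rangeI subset_antisym)
  qed
  show ?thesis
  proof (rule orthogonal_projector_unique)
  qed (simp_all add: props assms symmetric_mult_moore_penrose)
qed

section \<open>Complex eigenvalues and the spectral radius\<close>

definition complex_eigenvalue :: "real^'n^'n \<Rightarrow> complex \<Rightarrow> bool" where
  "complex_eigenvalue M z \<longleftrightarrow>
     (\<exists>v :: complex^'n. v \<noteq> 0 \<and> (\<chi> i j. complex_of_real (M $ i $ j)) *v v = z *s v)"

definition char_poly_matrix :: "'a::comm_ring_1^'n^'n \<Rightarrow> 'a poly^'n^'n" where
  "char_poly_matrix M = (\<chi> i j. [:- M $ i $ j, of_bool (i = j):])"

lemma poly_det_char_poly_matrix: "poly (det (char_poly_matrix M)) z = det (mat z - M)"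
proof -
  have "poly (char_poly_matrix M $ i $ j) z = (mat z - M) $ i $ j" for i j
    by (simp add: char_poly_matrix_def mat_def)
  then show ?thesis by (simp add: det_def poly_sum poly_prod)
qed

lemma coeff_det_char_poly_matrix:
  fixes M :: "'a::idom^'n^'n"
  shows "coeff (det (char_poly_matrix M)) CARD('n) = 1"
proof -
  let ?P = "char_poly_matrix M"
  let ?t = "\<lambda>p. of_int (sign p) * (\<Prod>i\<in>UNIV. ?P $ i $ p i)"
  have diagonal: "coeff (?t id) CARD('n) = 1"
  proof -
    have "degree (\<Prod>i\<in>UNIV. ?P $ i $ i) = CARD('n)"
      by (subst degree_prod_eq_sum_degree) (simp_all add: char_poly_matrix_def)
    moreover have "lead_coeff (\<Prod>i\<in>UNIV. ?P $ i $ i) = 1"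
      by (simp add: lead_coeff_prod char_poly_matrix_def)
    ultimately show ?thesis by (simp add: sign_id)
  qed
  have off_diagonal: "coeff (?t p) CARD('n) = 0" if "p \<noteq> id" for p
  proof -
    obtain i0 where i0: "p i0 \<noteq> i0" using \<open>p \<noteq> id\<close> by (auto simp: fun_eq_iff)
    \<comment> \<open>the off-diagonal factor in row \<open>i0\<close> is constant\<close>
    have "degree (?t p) \<le> degree (\<Prod>i\<in>UNIV. ?P $ i $ p i)"
      using degree_mult_le[of "of_int (sign p)" "\<Prod>i\<in>UNIV. ?P $ i $ p i"] by simp
    also have "\<dots> \<le> (\<Sum>i\<in>UNIV. degree (?P $ i $ p i))"
      using degree_prod_sum_le[of UNIV "\<lambda>i. ?P $ i $ p i"] by (simp add: o_def)
    also have "\<dots> = (\<Sum>i\<in>UNIV - {i0}. degree (?P $ i $ p i))"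
      using i0 by (simp add: sum.remove[of UNIV i0] char_poly_matrix_def)
    also have "\<dots> \<le> (\<Sum>i\<in>UNIV - {i0}. 1)"
      by (rule sum_mono) (simp add: char_poly_matrix_def)
    also have "\<dots> < CARD('n)" by (simp add: card_Diff_singleton)
    finally show ?thesis by (intro coeff_eq_0)
  qed
  have "coeff (det ?P) CARD('n) = (\<Sum>p\<in>{p. p permutes UNIV}. coeff (?t p) CARD('n))"
    unfolding det_def by (rule coeff_sum)
  also have "\<dots> = coeff (?t id) CARD('n) + (\<Sum>p\<in>{p. p permutes UNIV} - {id}. coeff (?t p) CARD('n))"
    by (rule sum.remove) (simp_all add: finite_permutations permutes_id)
  also have "\<dots> = coeff (?t id) CARD('n)" using off_diagonal by simp
  also have "\<dots> = 1" by (rule diagonal)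
  finally show ?thesis .
qed

lemma complex_matrix_has_eigenvalue:
  fixes M :: "complex^'n^'n"
  obtains z v where "v \<noteq> 0" "M *v v = z *s v"
proof -
  have "CARD('n) \<le> degree (det (char_poly_matrix M))"
    using coeff_det_char_poly_matrix[of M] by (intro le_degree) simp
  then have "\<not> constant (poly (det (char_poly_matrix M)))"
    using order.strict_trans2[OF zero_less_card_finite] by (simp add: constant_degree)
  then obtain z where "det (mat z - M) = 0"
    using fundamental_theorem_of_algebra poly_det_char_poly_matrix by metis
  then obtain v where "(mat z - M) *v v = 0" "v \<noteq> 0"
    using invertible_det_nz invertible_left_inverse matrix_left_invertible_ker by metis
  then show ?thesis
    using that[of v z] by (simp add: matrix_vector_mult_diff_rdistrib mat_vector_mult)
qed

lemma complex_eigenvalue_exists: "\<exists>z. complex_eigenvalue M z"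
  unfolding complex_eigenvalue_def by (metis complex_matrix_has_eigenvalue)

lemma spectral_radius_le:
  assumes "\<And>z. complex_eigenvalue M z \<Longrightarrow> cmod z \<le> c"
  shows "spectral_radius M \<le> c"
  unfolding spectral_radius_def
  using complex_eigenvalue_exists[of M] assms
  by (intro cSup_least) (auto simp: complex_eigenvalue_def)

lemma complex_eigenvalue_one_if_fixed_point:
  fixes H :: "real^'n^'n"
  assumes "H *v x = x" "x \<noteq> 0"
  shows "complex_eigenvalue H 1"
proof -
  have "(\<chi> i j. complex_of_real (H $ i $ j)) *v (\<chi> i. complex_of_real (x $ i))
      = (\<chi> i. complex_of_real ((H *v x) $ i))"
    by (simp add: vec_eq_iff matrix_vector_mult_def)
  then show ?thesis
    unfolding complex_eigenvalue_def using assms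
    by (intro exI[of _ "\<chi> i. complex_of_real (x $ i)"]) (auto simp: vec_eq_iff)
qed

lemma nonneg_eigenvalue_bound:
  fixes H :: "real^'n^'n" and w :: "real^'n"
  assumes "nonneg_mat H" and w_pos: "\<And>i. 0 < w $ i" and Hw: "\<And>i. (H *v w) $ i \<le> c * w $ i"
    and "complex_eigenvalue H z"
  shows "cmod z \<le> c"
proof -
  obtain v where "v \<noteq> 0" and ev: "(\<chi> i j. complex_of_real (H $ i $ j)) *v v = z *s v"
    using assms(4) by (auto simp: complex_eigenvalue_def)
  \<comment> \<open>compare \<open>|v|\<close> with \<open>w\<close> at the index where the ratio \<open>|v i| / w i\<close> is maximal\<close>
  define t where "t = Max (range (\<lambda>j. cmod (v $ j) / w $ j))"
  have "t \<in> range (\<lambda>j. cmod (v $ j) / w $ j)" unfolding t_def by (rule Max_in) auto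
  then obtain i0 where i0: "t = cmod (v $ i0) / w $ i0" by blast
  have v_le: "cmod (v $ j) \<le> t * w $ j" for j
  proof -
    have "cmod (v $ j) / w $ j \<le> t" unfolding t_def by (rule Max_ge) auto
    then show ?thesis using w_pos[of j] by (simp add: pos_divide_le_eq)
  qed
  obtain j where "v $ j \<noteq> 0" using \<open>v \<noteq> 0\<close> by (auto simp: vec_eq_iff)
  then have t_pos: "0 < t"
    using v_le[of j] w_pos[of j] by (smt (verit) mult_nonpos_nonneg norm_le_zero_iff)
  have "cmod z * (t * w $ i0) = cmod (((\<chi> i j. complex_of_real (H $ i $ j)) *v v) $ i0)"
    using ev i0 w_pos[of i0] by (simp add: norm_mult)
  also have "\<dots> \<le> (\<Sum>j\<in>UNIV. cmod (complex_of_real (H $ i0 $ j) * v $ j))"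
    unfolding matrix_vector_mult_def by (simp add: norm_sum)
  also have "\<dots> \<le> (\<Sum>j\<in>UNIV. H $ i0 $ j * (t * w $ j))"
    using assms(1) v_le by (intro sum_mono) (auto simp: norm_mult nonneg_mat_def intro: mult_left_mono)
  also have "\<dots> = t * (H *v w) $ i0"
    by (simp add: matrix_vector_mult_def sum_distrib_left algebra_simps)
  also have "\<dots> \<le> c * (t * w $ i0)" using Hw[of i0] t_pos by simp
  finally show ?thesis
    using t_pos w_pos[of i0] by simp
qed

lemma strict_row_bound_uniform:
  fixes H :: "real^'n^'n" and w :: "real^'n"
  assumes "\<And>i. 0 < w $ i" and "\<And>i. (H *v w) $ i < w $ i"
  obtains c where "c < 1" "\<And>i. (H *v w) $ i \<le> c * w $ i"
proof
  define c where "c = Max (range (\<lambda>i. (H *v w) $ i / w $ i))"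
  show "c < 1" unfolding c_def using assms by (simp add: Max_less_iff divide_less_eq)
  show "(H *v w) $ i \<le> c * w $ i" for i
  proof -
    have "(H *v w) $ i / w $ i \<le> c" unfolding c_def by (rule Max_ge) auto
    then show ?thesis using assms(1)[of i] by (simp add: pos_divide_le_eq)
  qed
qed

lemma nonneg_strictly_subinvariant:
  fixes H :: "real^'n^'n" and w :: "real^'n"
  assumes "nonneg_mat H" and "\<And>i. 0 < w $ i" and "\<And>i. (H *v w) $ i < w $ i"
  shows "spectral_radius H < 1" and "invertible (mat 1 - H)"
proof -
  obtain c where "c < 1" and c: "\<And>i. (H *v w) $ i \<le> c * w $ i"
    using strict_row_bound_uniform assms(2,3) by blast
  have bound: "cmod z \<le> c" if "complex_eigenvalue H z" for z
    using nonneg_eigenvalue_bound[OF assms(1,2) c that] .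
  show "spectral_radius H < 1"
    using spectral_radius_le[of H c, OF bound] \<open>c < 1\<close> by linarith
  have "x = 0" if "(mat 1 - H) *v x = 0" for x
    using that bound[of 1] \<open>c < 1\<close> complex_eigenvalue_one_if_fixed_point[of H x]
    by (force simp: matrix_vector_mult_diff_rdistrib)
  then show "invertible (mat 1 - H)" by (simp add: invertible_iff_mat_null mat_null_eq_0_iff)
qed

section \<open>Proper splittings of a matrix of full column rank\<close>

lemma proper_splittingD:
  assumes "proper_splitting A U V"
  shows "V = U - A" "mat_range U = mat_range A" "mat_null U = mat_null A"
  using assms unfolding proper_splitting_def by auto

lemma proper_splitting_full_column_rank:
  fixes A U V :: "real^'n^'m"
  assumes "proper_splitting A U V" and "mat_null A = {0}"
  shows "mat_null U = {0}"
    and "moore_penrose U ** A ** moore_penrose A = moore_penrose U"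
    and "moore_penrose U ** V = mat 1 - moore_penrose U ** A"
proof -
  note split = proper_splittingD[OF assms(1)]
  show U: "mat_null U = {0}" using split(3) assms(2) by simp
  have "U ** moore_penrose U = A ** moore_penrose A"
    using mult_moore_penrose_eq_if_range_eq[OF U assms(2) split(2)] .
  then have "moore_penrose U ** A ** moore_penrose A = moore_penrose U ** U ** moore_penrose U"
    by (simp flip: matrix_mul_assoc)
  then show "moore_penrose U ** A ** moore_penrose A = moore_penrose U"
    by (simp add: moore_penrose_left_inverse[OF U])
  show "moore_penrose U ** V = mat 1 - moore_penrose U ** A"
    by (simp add: split(1) matrix_diff_ldistrib moore_penrose_left_inverse[OF U])
qed

lemma induced_proper_splitting:
  fixes A :: "real^'n^'m" and H :: "real^'n^'n"
  assumes A: "mat_null A = {0}" and inv: "invertible (mat 1 - H)"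
  defines "B \<equiv> A ** matrix_inv (mat 1 - H)"
  shows "proper_splitting A B (B - A)"
    and "moore_penrose B ** (B - A) = H"
    and "moore_penrose B = (mat 1 - H) ** moore_penrose A"
proof -
  have BA: "B ** (mat 1 - H) = A"
    using matrix_inv_left[OF inv] by (simp add: B_def flip: matrix_mul_assoc)
  have B_eq: "B *v x = A *v (matrix_inv (mat 1 - H) *v x)" for x
    by (simp add: B_def matrix_vector_mul_assoc)
  have A_eq: "A *v x = B *v ((mat 1 - H) *v x)" for x
    by (simp add: BA matrix_vector_mul_assoc)
  have B: "mat_null B = {0}"
  proof -
    have "x = 0" if "B *v x = 0" for x
    proof -
      have "matrix_inv (mat 1 - H) *v x = 0" using that A by (simp add: B_eq mat_null_eq_0_iff)
      then have "(mat 1 - H) ** matrix_inv (mat 1 - H) *v x = 0"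
        by (simp flip: matrix_vector_mul_assoc)
      then show "x = 0" by (simp add: matrix_inv_right[OF inv])
    qed
    then show ?thesis by (simp add: mat_null_eq_0_iff)
  qed
  have "mat_range B = mat_range A"
    unfolding mat_range_def using B_eq A_eq by blast
  then show proper: "proper_splitting A B (B - A)"
    using A B by (simp add: proper_splitting_def)
  have BpA: "moore_penrose B ** A = mat 1 - H"
    using BA[symmetric] by (simp add: matrix_mul_assoc moore_penrose_left_inverse[OF B])
  then show "moore_penrose B ** (B - A) = H"
    by (simp add: matrix_diff_ldistrib moore_penrose_left_inverse[OF B])
  have "moore_penrose B = moore_penrose B ** A ** moore_penrose A"
    using proper_splitting_full_column_rank(2)[OF proper A] by simp
  then show "moore_penrose B = (mat 1 - H) ** moore_penrose A" by (simp add: BpA)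
qed

lemma induced_proper_splitting_unique:
  fixes A B C :: "real^'n^'m" and H :: "real^'n^'n"
  assumes A: "mat_null A = {0}" and inv: "invertible (mat 1 - H)"
    and split: "proper_splitting A B C" and induced: "moore_penrose B ** C = H"
  shows "B = A ** matrix_inv (mat 1 - H)" and "C = B - A"
proof -
  note C = proper_splittingD(1)[OF split]
  then show "C = B - A" .
  have B: "mat_null B = {0}" using A proper_splittingD(3)[OF split] by simp
  have "H = mat 1 - moore_penrose B ** A"
    using induced by (simp add: C matrix_diff_ldistrib moore_penrose_left_inverse[OF B])
  then have "moore_penrose B ** A = mat 1 - H" by simp
  then have "B ** (mat 1 - H) = B ** moore_penrose B ** A" by (simp flip: matrix_mul_assoc)
  also have "\<dots> = A ** moore_penrose A ** A"
    by (simp add: mult_moore_penrose_eq_if_range_eq[OF B A proper_splittingD(2)[OF split]])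
  also have "\<dots> = A" by (simp add: moore_penrose_left_inverse[OF A] flip: matrix_mul_assoc)
  finally have "B ** (mat 1 - H) ** matrix_inv (mat 1 - H) = A ** matrix_inv (mat 1 - H)" by simp
  then show "B = A ** matrix_inv (mat 1 - H)" by (simp add: matrix_inv_right[OF inv] flip: matrix_mul_assoc)
qed

section \<open>Proper weak regular multisplittings\<close>

lemma mat_null_eq_0_if_ranges_cover:
  fixes A :: "real^'n^'m" and E :: "'k \<Rightarrow> real^'n^'n"
  assumes sum_E: "(\<Sum>k\<in>K. E k) = mat 1"
    and ranges: "\<forall>k\<in>K. mat_range (E k) \<subseteq> mat_range (transpose A)"
  shows "mat_null A = {0}"
proof -
  have "x = 0" if Ax: "A *v x = 0" for x
  proof -
    have "\<forall>k\<in>K. \<exists>y. E k *v x = transpose A *v y"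
      using ranges unfolding mat_range_def by blast
    then obtain y where y: "\<And>k. k \<in> K \<Longrightarrow> E k *v x = transpose A *v y k" by metis
    have "x = (\<Sum>k\<in>K. E k *v x)"
      using sum_E by (simp flip: matrix_vector_sum_rdistrib)
    then have "x \<bullet> x = (\<Sum>k\<in>K. (E k *v x) \<bullet> x)"
      by (metis inner_sum_left)
    also have "\<dots> = (\<Sum>k\<in>K. y k \<bullet> (A *v x))"
      using y by (simp add: transpose_matrix_vector dot_lmul_matrix)
    finally show "x = 0" using Ax by simp
  qed
  then show ?thesis by (simp add: mat_null_eq_0_iff)
qed

lemma nonneg_left_inverse_row_sums_pos:
  fixes Y :: "real^'m^'n" and X :: "real^'n^'m"
  assumes nonneg: "nonneg_mat Y" and "Y ** X = mat 1"
  shows "0 < (Y *v (\<chi> i. 1)) $ i"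
proof -
  have "(\<Sum>j\<in>UNIV. Y $ i $ j * X $ j $ i) = 1"
    using assms(2) by (simp add: vec_eq_iff matrix_matrix_mult_def mat_def)
  then obtain j where "Y $ i $ j \<noteq> 0"
    by (metis (mono_tags, lifting) mult_zero_left sum.neutral zero_neq_one)
  then have "0 < Y $ i $ j" using nonneg by (simp add: nonneg_mat_def order_less_le)
  then show ?thesis using nonneg
    by (simp add: matrix_vector_mult_def) (rule sum_pos2[of UNIV j], auto simp: nonneg_mat_def)
qed

context
  fixes A :: "real^'n^'m" and p :: nat
    and U V :: "nat \<Rightarrow> real^'n^'m" and E :: "nat \<Rightarrow> real^'n^'n"
  assumes msplit: "proper_weak_regular_multisplitting A p U V E"
begin

lemma multisplitting_components:
  assumes "k \<in> {1..p}"
  shows "proper_splitting A (U k) (V k)" "nonneg_mat (moore_penrose (U k))"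
    "nonneg_mat (moore_penrose (U k) ** V k)" "nonneg_mat (E k)" "diagonal_mat (E k)"
  using msplit assms
  by (auto simp: proper_weak_regular_multisplitting_def proper_weak_regular_splitting_def)

lemma multisplitting_weights_sum: "(\<Sum>k=1..p. E k) = mat 1"
  using msplit by (simp add: proper_weak_regular_multisplitting_def)

lemma multisplitting_iteration_matrix_nonneg:
  "nonneg_mat (\<Sum>k=1..p. E k ** moore_penrose (U k) ** V k)"
  by (intro nonneg_mat_sum)
    (simp add: nonneg_mat_mult multisplitting_components(3,4) flip: matrix_mul_assoc)

context
  assumes A: "mat_null A = {0}"
begin

lemma multisplitting_iteration_matrix_eq:
  "(\<Sum>k=1..p. E k ** moore_penrose (U k) ** V k)
     = mat 1 - (\<Sum>k=1..p. E k ** moore_penrose (U k)) ** A"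
proof -
  have "(\<Sum>k=1..p. E k ** moore_penrose (U k) ** V k)
      = (\<Sum>k=1..p. E k - E k ** moore_penrose (U k) ** A)"
  proof (rule sum.cong[OF refl])
    fix k assume k: "k \<in> {1..p}"
    note split = proper_splitting_full_column_rank[OF multisplitting_components(1)[OF k] A]
    show "E k ** moore_penrose (U k) ** V k = E k - E k ** moore_penrose (U k) ** A"
      by (simp add: split(3) matrix_diff_ldistrib flip: matrix_mul_assoc)
  qed
  then show ?thesis
    unfolding sum_subtractf multisplitting_weights_sum matrix_sum_rdistrib .
qed

lemma multisplitting_absorbs_projector:
  "(\<Sum>k=1..p. E k ** moore_penrose (U k)) ** A ** moore_penrose A
     = (\<Sum>k=1..p. E k ** moore_penrose (U k))"
  unfolding matrix_sum_rdistrib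
proof (rule sum.cong[OF refl])
  fix k assume k: "k \<in> {1..p}"
  note split = proper_splitting_full_column_rank[OF multisplitting_components(1)[OF k] A]
  show "E k ** moore_penrose (U k) ** A ** moore_penrose A = E k ** moore_penrose (U k)"
    using split(2) by (simp flip: matrix_mul_assoc)
qed

lemma multisplitting_row_sums_pos:
  "0 < ((\<Sum>k=1..p. E k ** moore_penrose (U k)) *v (\<chi> i. 1)) $ i"
proof -
  let ?r = "\<lambda>k. (moore_penrose (U k) *v (\<chi> i. 1)) $ i"
  have r_pos: "0 < ?r k" if "k \<in> {1..p}" for k
  proof -
    have "mat_null (U k) = {0}"
      using proper_splitting_full_column_rank(1)[OF multisplitting_components(1)[OF that] A] .
    then show ?thesis
      using nonneg_left_inverse_row_sums_pos[OF multisplitting_components(2)[OF that]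
          moore_penrose_left_inverse] by blast
  qed
  have E_nonneg: "0 \<le> E k $ i $ i" if "k \<in> {1..p}" for k
    using multisplitting_components(4)[OF that] by (simp add: nonneg_mat_def)
  have "(\<Sum>k=1..p. E k $ i $ i) = 1"
    using arg_cong[OF multisplitting_weights_sum, of "\<lambda>X. X $ i $ i"] by (simp add: mat_def)
  then obtain k where k: "k \<in> {1..p}" "E k $ i $ i \<noteq> 0"
    using sum.neutral by force
  have "((\<Sum>k=1..p. E k ** moore_penrose (U k)) *v (\<chi> i. 1)) $ i = (\<Sum>k=1..p. E k $ i $ i * ?r k)"
    unfolding matrix_vector_sum_rdistrib sum_component
  proof (rule sum.cong[OF refl])
    fix k assume "k \<in> {1..p}"
    then show "((E k ** moore_penrose (U k)) *v (\<chi> i. 1)) $ i = E k $ i $ i * ?r k"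
      by (simp add: diagonal_mat_vector_mult multisplitting_components(5) flip: matrix_vector_mul_assoc)
  qed
  also have "0 < \<dots>"
  proof (rule sum_pos2[of "{1..p}" k])
    show "0 < E k $ i $ i * ?r k"
      using k E_nonneg[OF k(1)] r_pos[OF k(1)] by (simp add: order_less_le)
    show "0 \<le> E j $ i $ i * ?r j" if "j \<in> {1..p}" for j
      using E_nonneg[OF that] r_pos[OF that] by simp
  qed (use k in simp_all)
  finally show ?thesis .
qed

lemma multisplitting_strictly_subinvariant:
  "((\<Sum>k=1..p. E k ** moore_penrose (U k) ** V k) *v (moore_penrose A *v (\<chi> i. 1))) $ i
     < (moore_penrose A *v (\<chi> i. 1)) $ i"
proof -
  let ?G = "\<Sum>k=1..p. E k ** moore_penrose (U k)"
  have "(?G ** A) *v (moore_penrose A *v (\<chi> i. 1)) = ?G *v (\<chi> i. 1)"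
    unfolding matrix_vector_mul_assoc multisplitting_absorbs_projector ..
  then show ?thesis
    using multisplitting_row_sums_pos[of i]
    unfolding multisplitting_iteration_matrix_eq matrix_vector_mult_diff_rdistrib by simp
qed

end

end

theorem theorem5p5:
  fixes A :: "real^'n^'m" and p :: nat
    and U V :: "nat \<Rightarrow> real^'n^'m" and E :: "nat \<Rightarrow> real^'n^'n"
  assumes semimono: "nonneg_mat (moore_penrose A)"
    and msplit: "proper_weak_regular_multisplitting A p U V E"
    and rangeE: "\<forall>k\<in>{1..p}. mat_range (E k) \<subseteq> mat_range (transpose A)"
  defines "H \<equiv> (\<Sum>k=1..p. E k ** moore_penrose (U k) ** V k)"
  defines "B \<equiv> A ** matrix_inv (mat 1 - H)"
  defines "C \<equiv> B - A"
  shows "invertible (mat 1 - H) \<and>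
    proper_splitting A B C \<and> moore_penrose B ** C = H \<and>
    (\<forall>B' C'. proper_splitting A B' C' \<and> moore_penrose B' ** C' = H \<longrightarrow> B' = B \<and> C' = C) \<and>
    convergent_splitting B C \<and> proper_weak_regular_splitting A B C"
proof -
  let ?G = "\<Sum>k=1..p. E k ** moore_penrose (U k)"
  have A: "mat_null A = {0}"
    using mat_null_eq_0_if_ranges_cover[OF multisplitting_weights_sum[OF msplit] rangeE] .
  have w_pos: "0 < (moore_penrose A *v (\<chi> i. 1)) $ i" for i
    using nonneg_left_inverse_row_sums_pos[OF semimono moore_penrose_left_inverse[OF A]] .
  have H_nonneg: "nonneg_mat H"
    unfolding H_def using multisplitting_iteration_matrix_nonneg[OF msplit] .
  have H_subinv: "(H *v (moore_penrose A *v (\<chi> i. 1))) $ i < (moore_penrose A *v (\<chi> i. 1)) $ i" for i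
    unfolding H_def using multisplitting_strictly_subinvariant[OF msplit A] .
  note H_props = nonneg_strictly_subinvariant[OF H_nonneg w_pos H_subinv]
  note induced = induced_proper_splitting[OF A H_props(2), folded B_def C_def]
  have "moore_penrose B = ?G"
    using induced(3) multisplitting_absorbs_projector[OF msplit A]
    unfolding H_def multisplitting_iteration_matrix_eq[OF msplit A] by (simp flip: matrix_mul_assoc)
  moreover have "nonneg_mat ?G"
    by (intro nonneg_mat_sum nonneg_mat_mult multisplitting_components(2,4)[OF msplit])
  ultimately have B_nonneg: "nonneg_mat (moore_penrose B)" by simp
  have unique: "B' = B \<and> C' = C" if "proper_splitting A B' C'" "moore_penrose B' ** C' = H" for B' C'
    using induced_proper_splitting_unique[OF A H_props(2) that] by (simp add: B_def C_def)
  show ?thesis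
    unfolding convergent_splitting_def proper_weak_regular_splitting_def induced(2)
    using H_props induced(1) H_nonneg B_nonneg unique by blast
qed

end
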